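(* Let $q$ be a power of $2$, let $\alpha\in\mathbb{F}_q$ be such that $x^2+x+\alpha$ is irreducible over $\mathbb{F}_q$, and let $\beta\in\{0,\alpha\}$. Let $V$ be the $4$-dimensional symplectic space and $u=V_\beta(4)$ the linear map described in the context. Suppose $v\in V$ satisfies $v(u-1)^3\neq0$ and $(v(u-1),v(u-1)^2)\neq0$. Write $v_i=v(u-1)^{i-1}$ for $1\le i\le4$, and set $\lambda=(v_2,v_3)$ and $\mu=(v_1,v_2)$. Then $\beta=\alpha$ if and only if $x^2+x+\lambda^{-1}\mu$ is irreducible over $\mathbb{F}_q$.
   Context: $V$ has basis $e_{-3},e_{-1},e_1,e_3$ with symplectic form $(\,,\,)$ given by $(e_{-3},e_3)=(e_3,e_{-3})=1$, $(e_{-1},e_1)=(e_1,e_{-1})=1$, and all other values on pairs of basis vectors $0$. Vectors are acted on from the right. $V_\beta(4)$ is the linear map $e_{-3}\mapsto e_{-3}+e_{-1}+e_1+\beta e_3$, $e_{-1}\mapsto e_{-1}+e_1$, $e_1\mapsto e_1+e_3$, $e_3\mapsto e_3$; it preserves the symplectic form. *)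

theory Defs
  imports "HOL-Computational_Algebra.Polynomial" "HOL-Computational_Algebra.Factorial_Ring"
begin

text \<open>Vectors of V are written as coordinate tuples (a,b,c,d) meaning
  a e_{-3} + b e_{-1} + c e_1 + d e_3.\<close>

type_synonym 'a vec4 = "'a \<times> 'a \<times> 'a \<times> 'a"

definition sform :: "'a::comm_ring_1 vec4 \<Rightarrow> 'a vec4 \<Rightarrow> 'a" where
  "sform x y = (case x of (x1,x2,x3,x4) \<Rightarrow> case y of (y1,y2,y3,y4) \<Rightarrow>
      x1*y4 + x4*y1 + x2*y3 + x3*y2)"

text \<open>The map V_beta(4), acting from the right:
  e_{-3} -> e_{-3}+e_{-1}+e_1+beta e_3, e_{-1} -> e_{-1}+e_1, e_1 -> e_1+e_3, e_3 -> e_3.\<close>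
definition Vu :: "'a::comm_ring_1 \<Rightarrow> 'a vec4 \<Rightarrow> 'a vec4" where
  "Vu \<beta> x = (case x of (a,b,c,d) \<Rightarrow> (a, a + b, a + b + c, \<beta>*a + c + d))"

definition Vu_minus_1 :: "'a::comm_ring_1 \<Rightarrow> 'a vec4 \<Rightarrow> 'a vec4" where
  "Vu_minus_1 \<beta> x = (case (Vu \<beta> x, x) of ((y1,y2,y3,y4),(x1,x2,x3,x4)) \<Rightarrow>
      (y1 - x1, y2 - x2, y3 - x3, y4 - x4))"

end

theory Submission
  imports Defs
begin

text \<open>Writing \<open>v = (a, b, c, d)\<close>, one computes \<open>v\<^sub>2 = (0, a, a + b, \<beta>a + c)\<close>,
  \<open>v\<^sub>3 = (0, 0, a, a + b)\<close> and \<open>v\<^sub>4 = (0, 0, 0, a)\<close>, so \<open>a \<noteq> 0\<close>, \<open>\<lambda> = a\<^sup>2\<close> and, in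
  characteristic 2, \<open>\<mu> = \<beta>a\<^sup>2 + ab + b\<^sup>2\<close>. Hence \<open>\<lambda>\<inverse>\<mu> = \<beta> + t + t\<^sup>2\<close> with \<open>t = b/a\<close>, and the
  substitution \<open>x \<mapsto> x + t\<close> turns \<open>x\<^sup>2 + x + \<lambda>\<inverse>\<mu>\<close> into \<open>x\<^sup>2 + x + \<beta>\<close>. A quadratic
  is irreducible iff it has no root; \<open>x\<^sup>2 + x\<close> has the root 0 while \<open>x\<^sup>2 + x + \<alpha>\<close> is
  irreducible by hypothesis.\<close>

lemma degree_one_poly_has_root:
  fixes p :: "'a::field poly"
  assumes "degree p = 1"
  obtains x where "poly p x = 0"
proof -
  obtain a b where "p = [:b, a:]" and "a \<noteq> 0"
    using degree1_coeffs[OF assms] by blast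
  then have "poly p (- b / a) = 0"
    by (simp add: field_simps)
  then show thesis
    by (rule that)
qed

lemma irreducible_low_degree_iff_no_root:
  fixes p :: "'a::field poly"
  assumes "2 \<le> degree p" and "degree p \<le> 3"
  shows "irreducible p \<longleftrightarrow> (\<forall>x. poly p x \<noteq> 0)"
proof
  assume "irreducible p"
  then show "\<forall>x. poly p x \<noteq> 0"
    using root_imp_reducible_poly assms(1) by fastforce
next
  assume no_root: "\<forall>x. poly p x \<noteq> 0"
  show "irreducible p"
  proof (rule ccontr)
    assume "\<not> irreducible p"
    moreover have "p \<noteq> 0" "\<not> p dvd 1"
      using assms(1) by (auto simp: is_unit_poly_iff)
    ultimately obtain q r where p: "p = q * r" and "\<not> q dvd 1" "\<not> r dvd 1"
      by (auto simp: irreducible_def)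
    moreover have "q \<noteq> 0" "r \<noteq> 0"
      using \<open>p \<noteq> 0\<close> p by auto
    ultimately have "degree q > 0" "degree r > 0" "degree q + degree r \<le> 3"
      using assms(2) by (auto simp: is_unit_iff_degree degree_mult_eq)
    then have "degree q = 1 \<or> degree r = 1"
      by linarith
    then obtain x where "poly q x = 0 \<or> poly r x = 0"
      using degree_one_poly_has_root by metis
    then show False
      using no_root p by auto
  qed
qed

lemma CHAR_2_add_self:
  fixes x :: "'a::ring_1"
  assumes "CHAR('a) = 2"
  shows "x + x = 0"
  using uminus_CHAR_2[OF assms, of x] by (metis add.right_inverse)

lemma poly_artin_schreier_shift:
  fixes c t x :: "'a::comm_ring_1"
  assumes "CHAR('a) = 2"
  shows "poly [:c + t + t * t, 1, 1:] x = poly [:c, 1, 1:] (x + t)"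
proof -
  have "poly [:c, 1, 1:] (x + t) = poly [:c + t + t * t, 1, 1:] x + (x * t + x * t)"
    by (simp add: algebra_simps)
  then show ?thesis
    using CHAR_2_add_self[OF assms] by simp
qed

lemma irreducible_artin_schreier_shift:
  fixes c t :: "'a::field"
  assumes "CHAR('a) = 2"
  shows "irreducible [:c + t + t * t, 1, 1:] \<longleftrightarrow> irreducible [:c, 1, 1:]"
proof -
  have "(\<forall>x. poly [:c + t + t * t, 1, 1:] x \<noteq> 0) \<longleftrightarrow> (\<forall>y. poly [:c, 1, 1:] y \<noteq> 0)"
    unfolding poly_artin_schreier_shift[OF assms] by (metis diff_add_cancel)
  then show ?thesis
    by (simp add: irreducible_low_degree_iff_no_root)
qed

lemma Vu_minus_1_apply:
  "Vu_minus_1 \<beta> (a, b, c, d) = (0, a, a + b, \<beta> * a + c)"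
  by (simp add: Vu_minus_1_def Vu_def)

lemma Vu_minus_1_funpow_2:
  "(Vu_minus_1 \<beta> ^^ 2) (a, b, c, d) = (0, 0, a, a + b)"
  by (simp add: numeral_2_eq_2 Vu_minus_1_apply)

lemma Vu_minus_1_funpow_3:
  "(Vu_minus_1 \<beta> ^^ 3) (a, b, c, d) = (0, 0, 0, a)"
  by (simp add: numeral_3_eq_3 Vu_minus_1_apply)

lemma sform_Vu_minus_1_funpow_2:
  "sform (Vu_minus_1 \<beta> (a, b, c, d)) ((Vu_minus_1 \<beta> ^^ 2) (a, b, c, d)) = a * a"
  by (simp add: Vu_minus_1_apply Vu_minus_1_funpow_2 sform_def)

lemma sform_Vu_minus_1:
  fixes a b c d :: "'a::comm_ring_1"
  assumes "CHAR('a) = 2"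
  shows "sform (a, b, c, d) (Vu_minus_1 \<beta> (a, b, c, d)) = \<beta> * a * a + a * b + b * b"
proof -
  have "sform (a, b, c, d) (Vu_minus_1 \<beta> (a, b, c, d))
      = \<beta> * a * a + a * b + b * b + (a * c + a * c)"
    by (simp add: Vu_minus_1_apply sform_def algebra_simps)
  then show ?thesis
    using CHAR_2_add_self[OF assms] by simp
qed

theorem lemma5p3p3:
  fixes \<alpha> \<beta> :: "'a::{finite,field}" and v :: "'a vec4"
  assumes "CHAR('a) = 2"
    and "irreducible [:\<alpha>, 1, 1:]"
    and "\<beta> \<in> {0, \<alpha>}"
    and "(Vu_minus_1 \<beta> ^^ 3) v \<noteq> (0, 0, 0, 0)"
    and "sform (Vu_minus_1 \<beta> v) ((Vu_minus_1 \<beta> ^^ 2) v) \<noteq> 0"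
  shows "\<beta> = \<alpha> \<longleftrightarrow>
    (let v1 = v; v2 = Vu_minus_1 \<beta> v; v3 = (Vu_minus_1 \<beta> ^^ 2) v;
         lam = sform v2 v3; mu = sform v1 v2
     in irreducible [:inverse lam * mu, 1, 1:])"
proof -
  obtain a b c d where v: "v = (a, b, c, d)"
    by (cases v) auto
  have "a \<noteq> 0"
    using assms(4) by (simp add: v Vu_minus_1_funpow_3)
  then have quotient:
    "inverse (a * a) * (\<beta> * a * a + a * b + b * b) = \<beta> + b / a + b / a * (b / a)"
    by (simp add: field_simps)
  have "\<not> irreducible [:0, 1, 1::'a:]"
    by (subst irreducible_low_degree_iff_no_root) auto
  then have "\<beta> = \<alpha> \<longleftrightarrow> irreducible [:\<beta>, 1, 1:]"
    using assms(2,3) by auto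
  also have "\<dots> \<longleftrightarrow> irreducible [:\<beta> + b / a + b / a * (b / a), 1, 1:]"
    by (rule irreducible_artin_schreier_shift[OF assms(1), symmetric])
  finally show ?thesis
    unfolding Let_def v sform_Vu_minus_1_funpow_2 sform_Vu_minus_1[OF assms(1)] quotient .
qed

end
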